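(* Let $\Omega\subset\mathbb R^2$ be a smooth, bounded domain, $d_i,\chi,\lambda_i,\mu_i,a_i,b_i>0$ ($i\in\{1,2,3\}$), $0\le u_0,v_0\in\bigcup_{\theta>2}W^{1,\theta}(\Omega)$, $0\le w_0\in C^0(\overline\Omega)$, and let $(u,v,w)$ be the nonnegative, unique maximal classical solution on $\overline\Omega\times[0,T_{\max})$, $T_{\max}\in(0,\infty]$, of $$\begin{cases} u_t = d_1 \Delta u + u(\lambda_1 - \mu_1 u - a_1 v - a_2 w),\\ v_t = d_2 \Delta v + v(\lambda_2 - \mu_2 v + b_1 u - a_3 w),\\ w_t = d_3 \Delta w - \chi \nabla\cdot(w \nabla(uv)) + w(\lambda_3 - \mu_3 w + b_2 u + b_3 v) & \text{in } \Omega\times(0,T_{\max}),\\ \partial_\nu u = \partial_\nu v = \partial_\nu w = 0 & \text{on } \partial\Omega\times(0,T_{\max}),\\ u(\cdot,0)=u_0,\ v(\cdot,0)=v_0,\ w(\cdot,0)=w_0. \end{cases}$$ Then there is $C>0$ such that $\|u\|_{L^\infty(\Omega\times(0,T_{\max}))}\le C$ and $\|v\|_{L^\infty(\Omega\times(0,T_{\max}))}\le C$.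
   Context: The maximal classical solution belongs to $(C^{2,1}(\overline\Omega\times[0,T_{\max})))^3\cap C^0([0,T_{\max});W^{1,\theta}(\Omega)\times W^{1,\theta}(\Omega)\times C^0(\overline\Omega))$ for some $\theta>2$; its existence and uniqueness is established in the paper. $\nu$ is the outward unit normal. *)

theory Defs
  imports "HOL-Analysis.Analysis"
begin

type_synonym pt = "real^2"

definition has_pd :: "2 \<Rightarrow> (pt \<Rightarrow> real) \<Rightarrow> pt \<Rightarrow> bool" where
  "has_pd i f x \<longleftrightarrow> (\<lambda>s. f (x + s *\<^sub>R axis i 1)) differentiable (at 0)"

definition pd :: "2 \<Rightarrow> (pt \<Rightarrow> real) \<Rightarrow> pt \<Rightarrow> real" where
  "pd i f x = deriv (\<lambda>s. f (x + s *\<^sub>R axis i 1)) 0"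

definition grad :: "(pt \<Rightarrow> real) \<Rightarrow> pt \<Rightarrow> pt" where
  "grad f x = (\<chi> i. pd i f x)"

definition lap :: "(pt \<Rightarrow> real) \<Rightarrow> pt \<Rightarrow> real" where
  "lap f x = (\<Sum>i\<in>UNIV. pd i (pd i f) x)"

definition divg :: "(pt \<Rightarrow> pt) \<Rightarrow> pt \<Rightarrow> real" where
  "divg F x = (\<Sum>i\<in>UNIV. pd i (\<lambda>y. F y $ i) x)"

fun Ck :: "nat \<Rightarrow> (pt \<Rightarrow> real) \<Rightarrow> bool" where
  "Ck 0 f = continuous_on UNIV f"
| "Ck (Suc k) f = (continuous_on UNIV f \<and> (\<forall>i x. has_pd i f x) \<and> (\<forall>i. Ck k (pd i f)))"

definition smooth :: "(pt \<Rightarrow> real) \<Rightarrow> bool" where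
  "smooth f \<longleftrightarrow> (\<forall>k. Ck k f)"

definition smooth_bounded_domain :: "pt set \<Rightarrow> (pt \<Rightarrow> real) \<Rightarrow> bool" where
  "smooth_bounded_domain \<Omega> \<phi> \<longleftrightarrow> open \<Omega> \<and> connected \<Omega> \<and> \<Omega> \<noteq> {} \<and> bounded \<Omega> \<and>
     smooth \<phi> \<and> \<Omega> = {x. \<phi> x < 0} \<and> frontier \<Omega> = {x. \<phi> x = 0} \<and>
     (\<forall>x\<in>frontier \<Omega>. grad \<phi> x \<noteq> 0)"

definition normal :: "(pt \<Rightarrow> real) \<Rightarrow> pt \<Rightarrow> pt" where
  "normal \<phi> x = grad \<phi> x /\<^sub>R norm (grad \<phi> x)"

definition test_fn :: "pt set \<Rightarrow> (pt \<Rightarrow> real) \<Rightarrow> bool" where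
  "test_fn \<Omega> \<psi> \<longleftrightarrow> smooth \<psi> \<and> compact (closure {x. \<psi> x \<noteq> 0}) \<and> closure {x. \<psi> x \<noteq> 0} \<subseteq> \<Omega>"

definition weak_grad :: "pt set \<Rightarrow> real \<Rightarrow> (pt \<Rightarrow> real) \<Rightarrow> (pt \<Rightarrow> pt) \<Rightarrow> bool" where
  "weak_grad \<Omega> \<theta> f g \<longleftrightarrow>
     set_borel_measurable lborel \<Omega> f \<and> set_borel_measurable lborel \<Omega> g \<and>
     set_integrable lborel \<Omega> (\<lambda>x. \<bar>f x\<bar> powr \<theta>) \<and>
     set_integrable lborel \<Omega> (\<lambda>x. norm (g x) powr \<theta>) \<and>
     (\<forall>\<psi>. test_fn \<Omega> \<psi> \<longrightarrow> (\<forall>i.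
        set_integrable lborel \<Omega> (\<lambda>x. f x * pd i \<psi> x) \<and>
        set_integrable lborel \<Omega> (\<lambda>x. g x $ i * \<psi> x) \<and>
        (LINT x:\<Omega>|lborel. f x * pd i \<psi> x) = - (LINT x:\<Omega>|lborel. g x $ i * \<psi> x)))"

definition W1 :: "pt set \<Rightarrow> real \<Rightarrow> (pt \<Rightarrow> real) \<Rightarrow> bool" where
  "W1 \<Omega> \<theta> f \<longleftrightarrow> (\<exists>g. weak_grad \<Omega> \<theta> f g)"

definition tint :: "ereal \<Rightarrow> real set" where
  "tint T = {t. 0 < t \<and> ereal t < T}"

definition tint0 :: "ereal \<Rightarrow> real set" where
  "tint0 T = {t. 0 \<le> t \<and> ereal t < T}"

definition cont_ext :: "('a::topological_space) set \<Rightarrow> 'a set \<Rightarrow> ('a \<Rightarrow> real) \<Rightarrow> bool" where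
  "cont_ext S A F \<longleftrightarrow> continuous_on A F \<and> (\<forall>p\<in>S. \<exists>l. (F \<longlongrightarrow> l) (at p within A))"

definition C21 :: "pt set \<Rightarrow> ereal \<Rightarrow> (pt \<Rightarrow> real \<Rightarrow> real) \<Rightarrow> bool" where
  "C21 \<Omega> T u \<longleftrightarrow>
     continuous_on (closure \<Omega> \<times> tint0 T) (\<lambda>(x,t). u x t) \<and>
     (\<forall>x\<in>\<Omega>. \<forall>t\<in>tint T. (\<lambda>s. u x s) differentiable (at t) \<and>
        (\<forall>i. has_pd i (\<lambda>y. u y t) x \<and> (\<forall>j. has_pd j (pd i (\<lambda>y. u y t)) x))) \<and>
     cont_ext (closure \<Omega> \<times> tint T) (\<Omega> \<times> tint T) (\<lambda>(x,t). deriv (\<lambda>s. u x s) t) \<and>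
     (\<forall>i. cont_ext (closure \<Omega> \<times> tint T) (\<Omega> \<times> tint T) (\<lambda>(x,t). pd i (\<lambda>y. u y t) x)) \<and>
     (\<forall>i j. cont_ext (closure \<Omega> \<times> tint T) (\<Omega> \<times> tint T) (\<lambda>(x,t). pd j (pd i (\<lambda>y. u y t)) x))"

definition W1cont :: "pt set \<Rightarrow> real \<Rightarrow> ereal \<Rightarrow> (pt \<Rightarrow> real \<Rightarrow> real) \<Rightarrow> bool" where
  "W1cont \<Omega> \<theta> T u \<longleftrightarrow> (\<exists>G. (\<forall>t\<in>tint0 T. weak_grad \<Omega> \<theta> (\<lambda>x. u x t) (G t)) \<and>
     (\<forall>t0\<in>tint0 T. ((\<lambda>t. (LINT x:\<Omega>|lborel. \<bar>u x t - u x t0\<bar> powr \<theta>)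
                        + (LINT x:\<Omega>|lborel. norm (G t x - G t0 x) powr \<theta>)) \<longlongrightarrow> 0)
                   (at t0 within tint0 T)))"

definition classical_solution ::
  "pt set \<Rightarrow> (pt \<Rightarrow> real) \<Rightarrow> (nat \<Rightarrow> real) \<Rightarrow> real \<Rightarrow> (nat \<Rightarrow> real) \<Rightarrow> (nat \<Rightarrow> real) \<Rightarrow>
   (nat \<Rightarrow> real) \<Rightarrow> (nat \<Rightarrow> real) \<Rightarrow> (pt \<Rightarrow> real) \<Rightarrow> (pt \<Rightarrow> real) \<Rightarrow> (pt \<Rightarrow> real) \<Rightarrow>
   ereal \<Rightarrow> (pt \<Rightarrow> real \<Rightarrow> real) \<Rightarrow> (pt \<Rightarrow> real \<Rightarrow> real) \<Rightarrow> (pt \<Rightarrow> real \<Rightarrow> real) \<Rightarrow> bool" where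
  "classical_solution \<Omega> \<phi> d chi lam mu a b u0 v0 w0 T u v w \<longleftrightarrow>
     0 < T \<and> C21 \<Omega> T u \<and> C21 \<Omega> T v \<and> C21 \<Omega> T w \<and>
     (\<exists>\<theta>>2. W1cont \<Omega> \<theta> T u \<and> W1cont \<Omega> \<theta> T v) \<and>
     (\<forall>x\<in>\<Omega>. \<forall>t\<in>tint T.
        (\<forall>i. has_pd i (\<lambda>y. w y t * pd i (\<lambda>z. u z t * v z t) y) x) \<and>
        deriv (\<lambda>s. u x s) t = d 1 * lap (\<lambda>y. u y t) x
           + u x t * (lam 1 - mu 1 * u x t - a 1 * v x t - a 2 * w x t) \<and>
        deriv (\<lambda>s. v x s) t = d 2 * lap (\<lambda>y. v y t) x
           + v x t * (lam 2 - mu 2 * v x t + b 1 * u x t - a 3 * w x t) \<and>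
        deriv (\<lambda>s. w x s) t = d 3 * lap (\<lambda>y. w y t) x
           - chi * divg (\<lambda>y. w y t *\<^sub>R grad (\<lambda>z. u z t * v z t) y) x
           + w x t * (lam 3 - mu 3 * w x t + b 2 * u x t + b 3 * v x t)) \<and>
     (\<forall>x\<in>frontier \<Omega>. \<forall>t\<in>tint T.
        ((\<lambda>(y,s). grad (\<lambda>z. u z s) y \<bullet> normal \<phi> x) \<longlongrightarrow> 0) (at (x,t) within \<Omega> \<times> tint T) \<and>
        ((\<lambda>(y,s). grad (\<lambda>z. v z s) y \<bullet> normal \<phi> x) \<longlongrightarrow> 0) (at (x,t) within \<Omega> \<times> tint T) \<and>
        ((\<lambda>(y,s). grad (\<lambda>z. w z s) y \<bullet> normal \<phi> x) \<longlongrightarrow> 0) (at (x,t) within \<Omega> \<times> tint T)) \<and>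
     (AE x in lborel. x \<in> \<Omega> \<longrightarrow> u x 0 = u0 x) \<and>
     (AE x in lborel. x \<in> \<Omega> \<longrightarrow> v x 0 = v0 x) \<and>
     (\<forall>x\<in>closure \<Omega>. w x 0 = w0 x)"

definition maximal_solution ::
  "pt set \<Rightarrow> (pt \<Rightarrow> real) \<Rightarrow> (nat \<Rightarrow> real) \<Rightarrow> real \<Rightarrow> (nat \<Rightarrow> real) \<Rightarrow> (nat \<Rightarrow> real) \<Rightarrow>
   (nat \<Rightarrow> real) \<Rightarrow> (nat \<Rightarrow> real) \<Rightarrow> (pt \<Rightarrow> real) \<Rightarrow> (pt \<Rightarrow> real) \<Rightarrow> (pt \<Rightarrow> real) \<Rightarrow>
   ereal \<Rightarrow> (pt \<Rightarrow> real \<Rightarrow> real) \<Rightarrow> (pt \<Rightarrow> real \<Rightarrow> real) \<Rightarrow> (pt \<Rightarrow> real \<Rightarrow> real) \<Rightarrow> bool" where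
  "maximal_solution \<Omega> \<phi> d chi lam mu a b u0 v0 w0 T u v w \<longleftrightarrow>
     classical_solution \<Omega> \<phi> d chi lam mu a b u0 v0 w0 T u v w \<and>
     \<not> (\<exists>T' u' v' w'. T < T' \<and> classical_solution \<Omega> \<phi> d chi lam mu a b u0 v0 w0 T' u' v' w' \<and>
         (\<forall>x\<in>closure \<Omega>. \<forall>t\<in>tint0 T. u' x t = u x t \<and> v' x t = v x t \<and> w' x t = w x t))"

end

theory Submission
  imports Defs
begin

text \<open>Both bounds come from a comparison principle for Neumann problems: if
  \<open>u\<^sub>t \<le> d \<Delta>u\<close> wherever \<open>u \<ge> M\<close> and \<open>u(\<cdot>,0) \<le> M\<close>, then \<open>u \<le> M\<close>. Because all three
  components are nonnegative, \<open>u\<close> is a subsolution of the logistic equation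
  \<open>u\<^sub>t = d\<^sub>1 \<Delta>u + u(\<lambda>\<^sub>1 - \<mu>\<^sub>1 u)\<close>, hence \<open>u \<le> max(sup u(\<cdot>,0), \<lambda>\<^sub>1/\<mu>\<^sub>1) =: M\<^sub>1\<close>; then \<open>v\<close> is
  a subsolution of \<open>v\<^sub>t = d\<^sub>2 \<Delta>v + v(\<lambda>\<^sub>2 + b\<^sub>1 M\<^sub>1 - \<mu>\<^sub>2 v)\<close>. The cross-diffusion term only
  enters the equation for \<open>w\<close>.

  The comparison principle is proved by contradiction with the perturbation
  \<open>z = u - M - \<epsilon>(\<phi> + c + 1 + K t)\<close>, where \<open>\<phi>\<close> is the defining function of \<open>\<Omega>\<close>,
  \<open>c \<ge> sup |\<phi>|\<close> and \<open>K > d sup \<Delta>\<phi>\<close>. At the first time \<open>z\<close> reaches \<open>0\<close>, an interior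
  touching point gives \<open>u\<^sub>t \<ge> \<epsilon>K > d \<epsilon> sup \<Delta>\<phi> \<ge> d \<Delta>u\<close>, while at a boundary touching
  point the Neumann condition and \<open>\<partial>\<^sub>\<nu>\<phi> = |\<nabla>\<phi>| > 0\<close> make \<open>z\<close> increase along the inward normal.\<close>

section \<open>Elementary real analysis\<close>

lemma compact_continuous_abs_bound:
  fixes f :: "'a::topological_space \<Rightarrow> real"
  assumes "compact S" "continuous_on S f"
  obtains B where "B \<ge> 0" "\<forall>x\<in>S. \<bar>f x\<bar> \<le> B"
proof -
  have "bounded (f ` S)"
    using assms compact_continuous_image compact_imp_bounded by blast
  then obtain B where "\<forall>x\<in>S. \<bar>f x\<bar> \<le> B"
    unfolding bounded_iff by auto
  then show ?thesis
    using that[of "max B 0"] by fastforce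
qed

lemma second_derivative_nonpos_at_local_max:
  fixes F F' :: "real \<Rightarrow> real"
  assumes r: "r > 0" and F: "\<And>s. \<bar>s\<bar> < r \<Longrightarrow> (F has_real_derivative F' s) (at s)"
    and F': "(F' has_real_derivative D) (at 0)" and max: "\<And>s. \<bar>s\<bar> < r \<Longrightarrow> F s \<le> F 0"
  shows "D \<le> 0"
proof (rule ccontr)
  assume "\<not> D \<le> 0"
  have "F' 0 = 0"
    using DERIV_local_max[OF F[of 0] r] max r by simp
  then obtain e where e: "e > 0" "\<And>h. 0 < h \<Longrightarrow> h < e \<Longrightarrow> 0 < F' h"
    using DERIV_pos_inc_right[OF F'] \<open>\<not> D \<le> 0\<close> by force
  define c where "c = min e r / 2"
  have c: "0 < c" "c < e" "c < r"
    using e r by (auto simp: c_def)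
  have "F 0 < F c"
  proof (rule DERIV_pos_imp_increasing_open[OF c(1)])
    fix s assume "0 < s" "s < c"
    then show "\<exists>y. (F has_real_derivative y) (at s) \<and> 0 < y"
      using F[of s] e c by (intro exI[of _ "F' s"]) auto
  next
    show "continuous_on {0..c} F"
      using c by (intro continuous_at_imp_continuous_on ballI DERIV_isCont[OF F]) auto
  qed
  with max[of c] c show False
    by simp
qed

lemma derivative_nonneg_at_first_zero:
  fixes g :: "real \<Rightarrow> real"
  assumes g: "(g has_real_derivative D) (at t)" and "0 < t" "0 \<le> g t"
    and before: "\<And>s. 0 \<le> s \<Longrightarrow> s < t \<Longrightarrow> g s < 0"
  shows "0 \<le> D"
proof (rule ccontr)
  assume "\<not> 0 \<le> D"
  then obtain e where e: "e > 0" "\<And>h. 0 < h \<Longrightarrow> h < e \<Longrightarrow> g t < g (t - h)"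
    using DERIV_neg_dec_left[OF g] by force
  define h where "h = min e t / 2"
  have "g t < g (t - h)" "g (t - h) < 0"
    using e \<open>0 < t\<close> before[of "t - h"] by (auto simp: h_def)
  with \<open>0 \<le> g t\<close> show False
    by simp
qed

lemma has_real_derivative_along_line:
  fixes f :: "'a::real_inner \<Rightarrow> real"
  assumes "(f has_derivative (\<lambda>v. g \<bullet> v)) (at (x - h *\<^sub>R n))"
  shows "((\<lambda>s. f (x - s *\<^sub>R n)) has_real_derivative - (g \<bullet> n)) (at h)"
proof -
  have "((\<lambda>s. x - s *\<^sub>R n) has_derivative (\<lambda>k. - (k *\<^sub>R n))) (at h)"
    by (auto intro!: derivative_eq_intros)
  from has_derivative_compose[OF this assms]
  show ?thesis
    unfolding has_field_derivative_def by (rule has_derivative_eq_rhs) (auto simp: fun_eq_iff)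
qed

lemma tendsto_at_right_along_segment:
  fixes F :: "'a::real_normed_vector \<Rightarrow> 'b::topological_space"
  assumes lim: "(F \<longlongrightarrow> l) (at x within S)" and "n \<noteq> 0" "\<delta> > 0"
    and seg: "\<And>h. 0 < h \<Longrightarrow> h < \<delta> \<Longrightarrow> x - h *\<^sub>R n \<in> S"
  shows "((\<lambda>h. F (x - h *\<^sub>R n)) \<longlongrightarrow> l) (at_right 0)"
proof -
  have "filterlim (\<lambda>h. x - h *\<^sub>R n) (at x within S) (at_right 0)"
    unfolding filterlim_at
  proof
    show "\<forall>\<^sub>F h in at_right 0. x - h *\<^sub>R n \<in> S \<and> x - h *\<^sub>R n \<noteq> x"
      unfolding eventually_at_right_field using seg \<open>n \<noteq> 0\<close> \<open>\<delta> > 0\<close>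
      by (intro exI[of _ \<delta>]) auto
    have "((\<lambda>h. x - h *\<^sub>R n) \<longlongrightarrow> x - 0 *\<^sub>R n) (at_right 0)"
      by (intro tendsto_intros)
    then show "((\<lambda>h. x - h *\<^sub>R n) \<longlongrightarrow> x) (at_right 0)"
      by simp
  qed
  from filterlim_compose[OF lim this] show ?thesis .
qed

lemma first_touching_time:
  fixes z :: "'a::metric_space \<Rightarrow> real \<Rightarrow> real"
  assumes K: "compact K" and cont: "continuous_on (K \<times> {0..t1}) (\<lambda>(y, t). z y t)"
    and x1: "x1 \<in> K" "0 \<le> t1" "0 \<le> z x1 t1" and init: "\<And>y. y \<in> K \<Longrightarrow> z y 0 < 0"
  obtains x t where "x \<in> K" "0 < t" "t \<le> t1" "0 \<le> z x t"
    "\<And>y. y \<in> K \<Longrightarrow> z y t \<le> 0" "\<And>y s. y \<in> K \<Longrightarrow> 0 \<le> s \<Longrightarrow> s < t \<Longrightarrow> z y s < 0"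
proof -
  define A where "A = K \<times> {0..t1}"
  define S where "S = A \<inter> (\<lambda>(y, t). z y t) -` {0..}"
  have "compact A"
    unfolding A_def using K by (intro compact_Times) auto
  moreover have "closed S"
    unfolding S_def using cont \<open>compact A\<close>
    by (intro continuous_closed_preimage) (auto simp: A_def compact_imp_closed)
  ultimately have "compact S"
    using compact_Int_closed[of A S] by (simp add: S_def Int_absorb1)
  moreover have "(x1, t1) \<in> S"
    using x1 by (simp add: S_def A_def)
  ultimately obtain p where p: "p \<in> S" "\<And>q. q \<in> S \<Longrightarrow> snd p \<le> snd q"
    using continuous_attains_inf[of S snd] continuous_on_snd[OF continuous_on_id] by blast
  obtain x t where [simp]: "p = (x, t)"
    by fastforce
  have xt: "x \<in> K" "0 \<le> t" "t \<le> t1" "0 \<le> z x t"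
    using p(1) by (auto simp: S_def A_def)
  have before: "z y s < 0" if "y \<in> K" "0 \<le> s" "s < t" for y s
    using p(2)[of "(y, s)"] that xt by (force simp: S_def A_def)
  have "0 < t"
    using xt init[of x] by (cases "t = 0") auto
  have "z y t \<le> 0" if "y \<in> K" for y
  proof -
    have "(\<lambda>s. (y, s)) ` {0..t} \<subseteq> K \<times> {0..t1}"
      using that xt by auto
    then have "continuous_on {0..t} ((\<lambda>(y, t). z y t) \<circ> (\<lambda>s. (y, s)))"
      by (intro continuous_on_compose continuous_on_subset[OF cont] continuous_intros)
    then have "continuous_on {0..t} (\<lambda>s. z y s)"
      by (simp add: o_def)
    then have "((\<lambda>s. z y s) \<longlongrightarrow> z y t) (at_left t)"
      using \<open>0 < t\<close> by (simp add: continuous_on_Icc_at_leftD)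
    moreover have "\<forall>\<^sub>F s in at_left t. z y s \<le> 0"
      unfolding eventually_at_left_field using \<open>0 < t\<close> before[OF that]
      by (intro exI[of _ 0]) (auto simp: less_imp_le)
    ultimately show ?thesis
      by (rule tendsto_upperbound) simp
  qed
  with xt \<open>0 < t\<close> before show ?thesis
    using that by blast
qed

section \<open>Partial derivatives and the gradient\<close>

lemma has_pd_has_real_derivative:
  "has_pd i f x \<Longrightarrow> ((\<lambda>s. f (x + s *\<^sub>R axis i 1)) has_real_derivative pd i f x) (at 0)"
  unfolding has_pd_def pd_def by (simp add: DERIV_deriv_iff_real_differentiable)

lemma has_pd_has_real_derivative_at:
  assumes "has_pd i f (x + s *\<^sub>R axis i 1)"
  shows "((\<lambda>r. f (x + r *\<^sub>R axis i 1)) has_real_derivative pd i f (x + s *\<^sub>R axis i 1)) (at s)"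
proof -
  have "((\<lambda>r. f (x + (r + s) *\<^sub>R axis i 1)) has_real_derivative pd i f (x + s *\<^sub>R axis i 1)) (at 0)"
    using has_pd_has_real_derivative[OF assms] by (simp add: algebra_simps)
  then show ?thesis
    using DERIV_shift[of "\<lambda>r. f (x + r *\<^sub>R axis i 1)" _ 0 s] by simp
qed

lemma inner_grad: "grad f x \<bullet> h = pd 1 f x * h$1 + pd 2 f x * h$2"
  by (simp add: grad_def inner_vec_def sum_2)

lemma lap_eq: "lap f x = pd 1 (pd 1 f) x + pd 2 (pd 2 f) x"
  by (simp add: lap_def sum_2)

lemma pd_increment_estimate:
  assumes "has_pd i f x" "e > 0"
  obtains r where "r > 0"
    "\<And>s. \<bar>s\<bar> < r \<Longrightarrow> \<bar>f (x + s *\<^sub>R axis i 1) - f x - pd i f x * s\<bar> \<le> e * \<bar>s\<bar>"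
proof -
  have "((\<lambda>s. f (x + s *\<^sub>R axis i 1)) has_derivative (\<lambda>s. pd i f x * s)) (at 0)"
    using has_pd_has_real_derivative[OF assms(1)] by (simp add: has_field_derivative_def)
  then obtain r where "r > 0"
      "\<forall>s. norm (s - 0) < r \<longrightarrow> norm (f (x + s *\<^sub>R axis i 1) - f (x + 0 *\<^sub>R axis i 1) - pd i f x * (s - 0))
        \<le> e * norm (s - 0)"
    using assms(2) unfolding has_derivative_at_alt by blast
  then show ?thesis
    by (intro that[of r]) auto
qed

lemma pd_increment_mean_value:
  assumes "\<And>s. s \<in> closed_segment 0 a \<Longrightarrow> has_pd i f (x + s *\<^sub>R axis i 1)"
    and "\<And>s. s \<in> closed_segment 0 a \<Longrightarrow> \<bar>pd i f (x + s *\<^sub>R axis i 1) - c\<bar> \<le> e"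
  shows "\<bar>f (x + a *\<^sub>R axis i 1) - f x - c * a\<bar> \<le> e * \<bar>a\<bar>"
proof -
  define g where "g s = f (x + s *\<^sub>R axis i 1) - s * c" for s
  have "(g has_real_derivative pd i f (x + s *\<^sub>R axis i 1) - c) (at s)"
    if "s \<in> closed_segment 0 a" for s
    unfolding g_def using has_pd_has_real_derivative_at[OF assms(1)[OF that]]
    by (auto intro!: derivative_eq_intros)
  then have "norm (g a - g 0) \<le> e * norm (a - 0)"
    using assms(2)
    by (intro field_differentiable_bound[OF convex_closed_segment]) (auto intro: has_field_derivative_at_within)
  then show ?thesis
    by (simp add: g_def algebra_simps)
qed

lemma pd_increment_uniform_estimate:
  fixes f :: "pt \<Rightarrow> real"
  assumes S: "open S" "x \<in> S" and pd_ex: "\<And>y. y \<in> S \<Longrightarrow> has_pd i f y"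
    and pd_cont: "continuous_on S (pd i f)" and "e > 0"
  obtains r where "r > 0" "\<And>p a. dist p x + \<bar>a\<bar> < r \<Longrightarrow>
    \<bar>f (p + a *\<^sub>R axis i 1) - f p - pd i f x * a\<bar> \<le> e * \<bar>a\<bar>"
proof -
  have "isCont (pd i f) x"
    using pd_cont S by (simp add: continuous_on_eq_continuous_at)
  then obtain r1 where r1: "r1 > 0" "\<And>y. dist y x < r1 \<Longrightarrow> dist (pd i f y) (pd i f x) < e"
    using \<open>e > 0\<close> unfolding continuous_at_eps_delta by blast
  obtain r2 where r2: "r2 > 0" "ball x r2 \<subseteq> S"
    using S openE by blast
  have "\<bar>f (p + a *\<^sub>R axis i 1) - f p - pd i f x * a\<bar> \<le> e * \<bar>a\<bar>"
    if "dist p x + \<bar>a\<bar> < min r1 r2" for p a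
  proof (rule pd_increment_mean_value)
    fix s assume "s \<in> closed_segment 0 a"
    then have "\<bar>s\<bar> \<le> \<bar>a\<bar>"
      by (auto simp: closed_segment_eq_real_ivl split: if_splits)
    then have "dist (p + s *\<^sub>R axis i 1) x < min r1 r2"
      using that dist_triangle[of "p + s *\<^sub>R axis i 1" x p] by (simp add: dist_norm)
    then show "has_pd i f (p + s *\<^sub>R axis i 1)"
      and "\<bar>pd i f (p + s *\<^sub>R axis i 1) - pd i f x\<bar> \<le> e"
      using pd_ex r2(2) r1(2)[of "p + s *\<^sub>R axis i 1"] by (auto simp: dist_real_def dist_commute)
  qed
  then show ?thesis
    using that[of "min r1 r2"] r1 r2 by simp
qed

lemma has_derivative_grad:
  fixes f :: "pt \<Rightarrow> real"
  assumes S: "open S" "x \<in> S" and pd_ex: "\<And>y i. y \<in> S \<Longrightarrow> has_pd i f y"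
    and pd_cont: "\<And>i. continuous_on S (pd i f)"
  shows "(f has_derivative (\<lambda>h. grad f x \<bullet> h)) (at x)"
  unfolding has_derivative_at_alt
proof (intro conjI allI impI bounded_linear_inner_right)
  fix e :: real assume "e > 0"
  obtain r1 where r1: "r1 > 0" "\<And>p a. dist p x + \<bar>a\<bar> < r1 \<Longrightarrow>
      \<bar>f (p + a *\<^sub>R axis 1 1) - f p - pd 1 f x * a\<bar> \<le> e/2 * \<bar>a\<bar>"
    using pd_increment_uniform_estimate[OF S pd_ex pd_cont half_gt_zero[OF \<open>e > 0\<close>]] by blast
  obtain r2 where r2: "r2 > 0"
    "\<And>s. \<bar>s\<bar> < r2 \<Longrightarrow> \<bar>f (x + s *\<^sub>R axis 2 1) - f x - pd 2 f x * s\<bar> \<le> e/2 * \<bar>s\<bar>"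
    using pd_increment_estimate[OF pd_ex[OF S(2)] half_gt_zero[OF \<open>e > 0\<close>]] by blast
  define r where "r = min r1 r2 / 2"
  show "\<exists>r>0. \<forall>y. norm (y - x) < r \<longrightarrow> norm (f y - f x - grad f x \<bullet> (y - x)) \<le> e * norm (y - x)"
  proof (intro exI[of _ r] conjI allI impI)
    show "r > 0"
      using r1 r2 by (simp add: r_def)
    fix y assume y: "norm (y - x) < r"
    define a where "a = (y - x)$1"
    define b where "b = (y - x)$2"
    have ab: "\<bar>a\<bar> \<le> norm (y - x)" "\<bar>b\<bar> \<le> norm (y - x)"
      unfolding a_def b_def by (rule component_le_norm_cart)+
    define x' where "x' = x + b *\<^sub>R axis 2 1"
    have y_eq: "y = x' + a *\<^sub>R axis 1 1"
      by (simp add: x'_def a_def b_def vec_eq_iff forall_2 axis_def)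
    have "dist x' x + \<bar>a\<bar> < r1"
      using ab y by (simp add: x'_def dist_norm r_def)
    then have A: "\<bar>f y - f x' - pd 1 f x * a\<bar> \<le> e/2 * \<bar>a\<bar>"
      unfolding y_eq by (rule r1(2))
    have B: "\<bar>f x' - f x - pd 2 f x * b\<bar> \<le> e/2 * \<bar>b\<bar>"
      unfolding x'_def using r2 ab y by (simp add: r_def)
    have "f y - f x - grad f x \<bullet> (y - x) = (f y - f x' - pd 1 f x * a) + (f x' - f x - pd 2 f x * b)"
      by (simp add: inner_grad a_def b_def algebra_simps)
    also have "\<bar>\<dots>\<bar> \<le> e/2 * \<bar>a\<bar> + e/2 * \<bar>b\<bar>"
      using A B by linarith
    also have "\<dots> \<le> e * norm (y - x)"
      using mult_left_mono[OF ab(1), of "e/2"] mult_left_mono[OF ab(2), of "e/2"] \<open>e > 0\<close> by linarith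
    finally show "norm (f y - f x - grad f x \<bullet> (y - x)) \<le> e * norm (y - x)"
      by simp
  qed
qed

lemma lap_le_at_touching_point:
  fixes f g :: "pt \<Rightarrow> real"
  assumes "r > 0"
    and f: "\<And>y i. y \<in> ball x r \<Longrightarrow> has_pd i f y" "\<And>i. has_pd i (pd i f) x"
    and g: "\<And>y i. y \<in> ball x r \<Longrightarrow> has_pd i g y" "\<And>i. has_pd i (pd i g) x"
    and touch: "\<And>y. y \<in> ball x r \<Longrightarrow> f y - c * g y \<le> f x - c * g x"
  shows "lap f x \<le> c * lap g x"
proof -
  have "pd i (pd i f) x - c * pd i (pd i g) x \<le> 0" for i
  proof (rule second_derivative_nonpos_at_local_max[OF \<open>r > 0\<close>])
    have on_line: "x + s *\<^sub>R axis i 1 \<in> ball x r" if "\<bar>s\<bar> < r" for s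
      using that by (simp add: dist_norm)
    fix s :: real assume "\<bar>s\<bar> < r"
    then show "((\<lambda>s. f (x + s *\<^sub>R axis i 1) - c * g (x + s *\<^sub>R axis i 1)) has_real_derivative
        (\<lambda>s. pd i f (x + s *\<^sub>R axis i 1) - c * pd i g (x + s *\<^sub>R axis i 1)) s) (at s)"
      using has_pd_has_real_derivative_at[OF f(1)[OF on_line]]
        has_pd_has_real_derivative_at[OF g(1)[OF on_line]]
      by (auto intro!: derivative_eq_intros)
    show "f (x + s *\<^sub>R axis i 1) - c * g (x + s *\<^sub>R axis i 1)
        \<le> f (x + 0 *\<^sub>R axis i 1) - c * g (x + 0 *\<^sub>R axis i 1)"
      using touch on_line \<open>\<bar>s\<bar> < r\<close> by simp
  next
    show "((\<lambda>s. pd i f (x + s *\<^sub>R axis i 1) - c * pd i g (x + s *\<^sub>R axis i 1)) has_real_derivative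
        pd i (pd i f) x - c * pd i (pd i g) x) (at 0)"
      using has_pd_has_real_derivative[OF f(2)] has_pd_has_real_derivative[OF g(2)]
      by (auto intro!: derivative_eq_intros)
  qed
  from this[of 1] this[of 2] show ?thesis
    unfolding lap_eq by (simp add: algebra_simps)
qed

lemma smooth_C2:
  assumes "smooth \<phi>"
  shows "continuous_on UNIV \<phi>" "has_pd i \<phi> x" "continuous_on UNIV (pd i \<phi>)"
    "has_pd j (pd i \<phi>) x" "continuous_on UNIV (pd j (pd i \<phi>))"
  using assms[unfolded smooth_def, rule_format, of 2] by (auto simp: numeral_2_eq_2)

lemma smooth_has_derivative:
  "smooth \<phi> \<Longrightarrow> (\<phi> has_derivative (\<lambda>h. grad \<phi> x \<bullet> h)) (at x)"
  using has_derivative_grad[of UNIV x \<phi>] smooth_C2 by auto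

lemma smooth_continuous_grad: "smooth \<phi> \<Longrightarrow> continuous_on UNIV (grad \<phi>)"
  unfolding grad_def using smooth_C2(3) by (intro continuous_on_vec_lambda)

lemma smooth_continuous_lap: "smooth \<phi> \<Longrightarrow> continuous_on UNIV (lap \<phi>)"
  unfolding lap_eq[abs_def] using smooth_C2(5) by (intro continuous_intros)

lemma C21D:
  assumes "C21 \<Omega> T u"
  shows C21_continuous: "continuous_on (closure \<Omega> \<times> tint0 T) (\<lambda>(x, t). u x t)"
    and C21_time_differentiable: "\<And>x t. x \<in> \<Omega> \<Longrightarrow> t \<in> tint T \<Longrightarrow> (\<lambda>s. u x s) differentiable (at t)"
    and C21_has_pd: "\<And>x t. x \<in> \<Omega> \<Longrightarrow> t \<in> tint T \<Longrightarrow> has_pd i (\<lambda>y. u y t) x"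
    and C21_has_pd2: "\<And>x t. x \<in> \<Omega> \<Longrightarrow> t \<in> tint T \<Longrightarrow> has_pd j (pd i (\<lambda>y. u y t)) x"
    and C21_continuous_pd: "continuous_on (\<Omega> \<times> tint T) (\<lambda>(x, t). pd i (\<lambda>y. u y t) x)"
  using assms unfolding C21_def cont_ext_def by blast+

lemma C21_slice_continuous:
  assumes "C21 \<Omega> T u" "t \<in> tint0 T"
  shows "continuous_on (closure \<Omega>) (\<lambda>y. u y t)"
proof -
  have "continuous_on (closure \<Omega>) ((\<lambda>(x, t). u x t) \<circ> (\<lambda>y. (y, t)))"
    using assms by (intro continuous_on_compose continuous_on_subset[OF C21_continuous] continuous_intros) auto
  then show ?thesis
    by (simp add: o_def)
qed

lemma C21_continuous_on_Icc:
  assumes "C21 \<Omega> T u" "ereal t0 < T"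
  shows "continuous_on (closure \<Omega> \<times> {0..t0}) (\<lambda>(y, t). u y t)"
proof (rule continuous_on_subset[OF C21_continuous[OF assms(1)]])
  show "closure \<Omega> \<times> {0..t0} \<subseteq> closure \<Omega> \<times> tint0 T"
    using assms(2) by (auto simp: tint0_def) (meson ereal_less_eq(3) order.strict_trans1)
qed

lemma C21_slice_has_derivative:
  assumes "C21 \<Omega> T u" "open \<Omega>" "y \<in> \<Omega>" "t \<in> tint T"
  shows "((\<lambda>y. u y t) has_derivative (\<lambda>h. grad (\<lambda>y. u y t) y \<bullet> h)) (at y)"
proof (rule has_derivative_grad[OF \<open>open \<Omega>\<close> \<open>y \<in> \<Omega>\<close>])
  show "has_pd i (\<lambda>y. u y t) x" if "x \<in> \<Omega>" for x i
    using C21_has_pd[OF assms(1) that assms(4)] .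
  have "continuous_on \<Omega> ((\<lambda>(x, t). pd i (\<lambda>y. u y t) x) \<circ> (\<lambda>y. (y, t)))" for i
    using assms by (intro continuous_on_compose continuous_on_subset[OF C21_continuous_pd] continuous_intros) auto
  then show "continuous_on \<Omega> (pd i (\<lambda>y. u y t))" for i
    by (simp add: o_def)
qed

section \<open>The boundary\<close>

lemma grad_inner_normal: "grad \<phi> x \<bullet> normal \<phi> x = norm (grad \<phi> x)"
  by (cases "grad \<phi> x = 0")
    (simp_all add: normal_def power2_norm_eq_inner[symmetric] power2_eq_square)

lemma inward_normal_in_domain:
  assumes dom: "smooth_bounded_domain \<Omega> \<phi>" and x: "x \<in> frontier \<Omega>"
  obtains \<delta> where "\<delta> > 0" "\<And>h. 0 < h \<Longrightarrow> h < \<delta> \<Longrightarrow> x - h *\<^sub>R normal \<phi> x \<in> \<Omega>"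
proof -
  have sm: "smooth \<phi>" and \<Omega>_eq: "\<Omega> = {x. \<phi> x < 0}" and "\<phi> x = 0" and "grad \<phi> x \<noteq> 0"
    using dom x unfolding smooth_bounded_domain_def by auto
  have "(\<phi> has_derivative (\<lambda>v. grad \<phi> x \<bullet> v)) (at (x - 0 *\<^sub>R normal \<phi> x))"
    using smooth_has_derivative[OF sm] by simp
  from has_real_derivative_along_line[OF this]
  have "((\<lambda>s. \<phi> (x - s *\<^sub>R normal \<phi> x)) has_real_derivative - norm (grad \<phi> x)) (at 0)"
    by (simp add: grad_inner_normal)
  then obtain \<delta> where "\<delta> > 0" "\<And>h. 0 < h \<Longrightarrow> h < \<delta> \<Longrightarrow> \<phi> (x - h *\<^sub>R normal \<phi> x) < \<phi> x"
    using DERIV_neg_dec_right[of _ "- norm (grad \<phi> x)" 0] \<open>grad \<phi> x \<noteq> 0\<close> by force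
  with \<open>\<phi> x = 0\<close> show ?thesis
    using that \<Omega>_eq by auto
qed

definition neumann_bc :: "pt set \<Rightarrow> (pt \<Rightarrow> real) \<Rightarrow> ereal \<Rightarrow> (pt \<Rightarrow> real \<Rightarrow> real) \<Rightarrow> bool" where
  "neumann_bc \<Omega> \<phi> T u \<longleftrightarrow> (\<forall>x\<in>frontier \<Omega>. \<forall>t\<in>tint T.
     ((\<lambda>(y, s). grad (\<lambda>z. u z s) y \<bullet> normal \<phi> x) \<longlongrightarrow> 0) (at (x, t) within \<Omega> \<times> tint T))"

lemma neumann_bc_slice:
  assumes "neumann_bc \<Omega> \<phi> T u" "x \<in> frontier \<Omega>" "t \<in> tint T"
  shows "((\<lambda>y. grad (\<lambda>z. u z t) y \<bullet> normal \<phi> x) \<longlongrightarrow> 0) (at x within \<Omega>)"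
proof -
  have "filterlim (\<lambda>y. (y, t)) (at (x, t) within \<Omega> \<times> tint T) (at x within \<Omega>)"
    unfolding filterlim_at using \<open>t \<in> tint T\<close>
    by (auto simp: eventually_at_filter intro!: tendsto_eq_intros)
  from filterlim_compose[OF _ this] assms show ?thesis
    unfolding neumann_bc_def by fastforce
qed

lemma inward_normal_derivative_eventually_pos:
  fixes f :: "pt \<Rightarrow> real"
  assumes dom: "smooth_bounded_domain \<Omega> \<phi>" and x: "x \<in> frontier \<Omega>" and "\<epsilon> > 0"
    and neumann: "((\<lambda>y. grad f y \<bullet> normal \<phi> x) \<longlongrightarrow> 0) (at x within \<Omega>)"
  obtains b where "b > 0" "\<And>h. 0 < h \<Longrightarrow> h < b \<Longrightarrow>
    0 < \<epsilon> * (grad \<phi> (x - h *\<^sub>R normal \<phi> x) \<bullet> normal \<phi> x) - grad f (x - h *\<^sub>R normal \<phi> x) \<bullet> normal \<phi> x"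
proof -
  have sm: "smooth \<phi>" and "grad \<phi> x \<noteq> 0"
    using dom x unfolding smooth_bounded_domain_def by auto
  define n where "n = normal \<phi> x"
  have "n \<noteq> 0"
    using \<open>grad \<phi> x \<noteq> 0\<close> by (simp add: n_def normal_def)
  obtain \<delta> where \<delta>: "\<delta> > 0" "\<And>h. 0 < h \<Longrightarrow> h < \<delta> \<Longrightarrow> x - h *\<^sub>R n \<in> \<Omega>"
    using inward_normal_in_domain[OF dom x] unfolding n_def by blast
  have "continuous (at x within \<Omega>) (grad \<phi>)"
    using smooth_continuous_grad[OF sm]
    by (simp add: continuous_on_eq_continuous_at continuous_at_imp_continuous_within)
  then have "((\<lambda>y. grad \<phi> y \<bullet> n) \<longlongrightarrow> grad \<phi> x \<bullet> n) (at x within \<Omega>)"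
    unfolding continuous_within by (rule tendsto_inner[OF _ tendsto_const])
  then have "((\<lambda>h. grad \<phi> (x - h *\<^sub>R n) \<bullet> n) \<longlongrightarrow> norm (grad \<phi> x)) (at_right 0)"
    using tendsto_at_right_along_segment[OF _ \<open>n \<noteq> 0\<close> \<delta>] by (simp add: n_def grad_inner_normal)
  moreover have "((\<lambda>h. grad f (x - h *\<^sub>R n) \<bullet> n) \<longlongrightarrow> 0) (at_right 0)"
    using tendsto_at_right_along_segment[OF neumann[folded n_def] \<open>n \<noteq> 0\<close> \<delta>] .
  ultimately have "((\<lambda>h. \<epsilon> * (grad \<phi> (x - h *\<^sub>R n) \<bullet> n) - grad f (x - h *\<^sub>R n) \<bullet> n)
      \<longlongrightarrow> \<epsilon> * norm (grad \<phi> x) - 0) (at_right 0)"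
    by (intro tendsto_diff tendsto_mult_left)
  moreover have "\<epsilon> * norm (grad \<phi> x) - 0 > 0"
    using \<open>\<epsilon> > 0\<close> \<open>grad \<phi> x \<noteq> 0\<close> by simp
  ultimately have "\<forall>\<^sub>F h in at_right 0. 0 < \<epsilon> * (grad \<phi> (x - h *\<^sub>R n) \<bullet> n) - grad f (x - h *\<^sub>R n) \<bullet> n"
    by (rule order_tendstoD(1))
  then show ?thesis
    using that unfolding eventually_at_right_field n_def by blast
qed

lemma Neumann_perturbation_increases_inward:
  fixes f :: "pt \<Rightarrow> real"
  assumes dom: "smooth_bounded_domain \<Omega> \<phi>" and x: "x \<in> frontier \<Omega>" and "\<epsilon> > 0"
    and f_cont: "continuous_on (closure \<Omega>) f"
    and f_deriv: "\<And>y. y \<in> \<Omega> \<Longrightarrow> (f has_derivative (\<lambda>h. grad f y \<bullet> h)) (at y)"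
    and neumann: "((\<lambda>y. grad f y \<bullet> normal \<phi> x) \<longlongrightarrow> 0) (at x within \<Omega>)"
  shows "\<exists>y\<in>\<Omega>. f x - \<epsilon> * \<phi> x < f y - \<epsilon> * \<phi> y"
proof -
  have sm: "smooth \<phi>"
    using dom unfolding smooth_bounded_domain_def by auto
  define n where "n = normal \<phi> x"
  obtain \<delta> where \<delta>: "\<delta> > 0" "\<And>h. 0 < h \<Longrightarrow> h < \<delta> \<Longrightarrow> x - h *\<^sub>R n \<in> \<Omega>"
    using inward_normal_in_domain[OF dom x] unfolding n_def by blast
  obtain b where b: "b > 0" "\<And>h. 0 < h \<Longrightarrow> h < b \<Longrightarrow>
      0 < \<epsilon> * (grad \<phi> (x - h *\<^sub>R n) \<bullet> n) - grad f (x - h *\<^sub>R n) \<bullet> n"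
    using inward_normal_derivative_eventually_pos[OF dom x \<open>\<epsilon> > 0\<close> neumann] unfolding n_def by blast
  define c where "c = min b \<delta> / 2"
  have c: "0 < c" "c < b" "c < \<delta>"
    using b \<delta> by (auto simp: c_def)
  have seg: "x - h *\<^sub>R n \<in> closure \<Omega>" if "0 \<le> h" "h \<le> c" for h
    using that x \<delta>(2)[of h] c closure_subset frontier_def
    by (cases "h = 0") auto
  define g where "g h = f (x - h *\<^sub>R n) - \<epsilon> * \<phi> (x - h *\<^sub>R n)" for h
  have "g 0 < g c"
  proof (rule DERIV_pos_imp_increasing_open[OF c(1)])
    fix h assume h: "0 < h" "h < c"
    have "((\<lambda>h. f (x - h *\<^sub>R n)) has_real_derivative - (grad f (x - h *\<^sub>R n) \<bullet> n)) (at h)"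
      using h c by (intro has_real_derivative_along_line f_deriv \<delta>(2)) auto
    moreover have "((\<lambda>h. \<phi> (x - h *\<^sub>R n)) has_real_derivative - (grad \<phi> (x - h *\<^sub>R n) \<bullet> n)) (at h)"
      by (intro has_real_derivative_along_line smooth_has_derivative[OF sm])
    ultimately have "(g has_real_derivative \<epsilon> * (grad \<phi> (x - h *\<^sub>R n) \<bullet> n) - grad f (x - h *\<^sub>R n) \<bullet> n) (at h)"
      unfolding g_def by (auto intro!: derivative_eq_intros)
    then show "\<exists>y. (g has_real_derivative y) (at h) \<and> 0 < y"
      using b(2)[of h] h c by auto
  next
    have "continuous_on {0..c} (f \<circ> (\<lambda>h. x - h *\<^sub>R n))"
      using seg by (intro continuous_on_compose continuous_on_subset[OF f_cont] continuous_intros) auto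
    moreover have "continuous_on {0..c} (\<phi> \<circ> (\<lambda>h. x - h *\<^sub>R n))"
      by (intro continuous_on_compose continuous_on_subset[OF smooth_C2(1)[OF sm]] continuous_intros) auto
    ultimately show "continuous_on {0..c} g"
      unfolding g_def by (intro continuous_intros) (simp_all add: o_def)
  qed
  then show ?thesis
    using \<delta>(2)[of c] c unfolding g_def by auto
qed

section \<open>The comparison principle\<close>

lemma first_touching_of_perturbation:
  fixes u :: "pt \<Rightarrow> real \<Rightarrow> real" and K M \<epsilon> c :: real
  assumes dom: "smooth_bounded_domain \<Omega> \<phi>" and u: "C21 \<Omega> T u" and "0 \<le> K" "0 < \<epsilon>"
    and c: "\<And>x. x \<in> closure \<Omega> \<Longrightarrow> \<bar>\<phi> x\<bar> \<le> c"
    and init: "\<And>x. x \<in> closure \<Omega> \<Longrightarrow> u x 0 \<le> M"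
    and x0: "x0 \<in> closure \<Omega>" and "t0 \<in> tint T"
    and start: "\<epsilon> * (\<phi> x0 + c + 1 + K * t0) \<le> u x0 t0 - M"
  obtains xs ts where "xs \<in> closure \<Omega>" "ts \<in> tint T" "M \<le> u xs ts"
    "\<And>y. y \<in> closure \<Omega> \<Longrightarrow> u y ts - \<epsilon> * \<phi> y \<le> u xs ts - \<epsilon> * \<phi> xs"
    "\<And>s. 0 \<le> s \<Longrightarrow> s < ts \<Longrightarrow> u xs s - \<epsilon> * K * s < u xs ts - \<epsilon> * K * ts"
proof -
  have sm: "smooth \<phi>" and cpt: "compact (closure \<Omega>)"
    using dom unfolding smooth_bounded_domain_def by (auto simp: compact_closure)
  have "0 < t0" "ereal t0 < T"
    using \<open>t0 \<in> tint T\<close> by (auto simp: tint_def)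
  define z where "z y t = u y t - M - \<epsilon> * (\<phi> y + c + 1 + K * t)" for y t
  have z_cont: "continuous_on (closure \<Omega> \<times> {0..t0}) (\<lambda>(y, t). z y t)"
    using C21_continuous_on_Icc[OF u \<open>ereal t0 < T\<close>] unfolding z_def split_beta
    by (intro continuous_intros continuous_on_compose2[OF smooth_C2(1)[OF sm]]) auto
  have "z y 0 < 0" if "y \<in> closure \<Omega>" for y
  proof -
    have "0 < \<phi> y + c + 1"
      using c[OF that] by (simp add: abs_le_iff)
    with \<open>0 < \<epsilon>\<close> have "0 < \<epsilon> * (\<phi> y + c + 1)"
      by simp
    then show ?thesis
      using init[OF that] by (simp add: z_def)
  qed
  moreover have "0 \<le> z x0 t0"
    using start by (simp add: z_def)
  ultimately obtain xs ts where xs: "xs \<in> closure \<Omega>" and "0 < ts" "ts \<le> t0" "0 \<le> z xs ts"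
    and below: "\<And>y. y \<in> closure \<Omega> \<Longrightarrow> z y ts \<le> 0"
    and before: "\<And>s. 0 \<le> s \<Longrightarrow> s < ts \<Longrightarrow> z xs s < 0"
    using first_touching_time[OF cpt z_cont x0] \<open>0 < t0\<close> by (metis less_imp_le)
  show ?thesis
  proof (rule that[OF xs])
    show "ts \<in> tint T"
      using \<open>0 < ts\<close> \<open>ts \<le> t0\<close> \<open>ereal t0 < T\<close>
      by (auto simp: tint_def) (meson ereal_less_eq(3) order.strict_trans1)
    have "0 \<le> \<phi> xs + c + 1 + K * ts"
      using c[OF xs] \<open>0 \<le> K\<close> \<open>0 < ts\<close> by (simp add: abs_le_iff)
    with \<open>0 < \<epsilon>\<close> have "0 \<le> \<epsilon> * (\<phi> xs + c + 1 + K * ts)"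
      by simp
    with \<open>0 \<le> z xs ts\<close> show "M \<le> u xs ts"
      by (simp add: z_def)
    show "u y ts - \<epsilon> * \<phi> y \<le> u xs ts - \<epsilon> * \<phi> xs" if "y \<in> closure \<Omega>" for y
      using below[OF that] \<open>0 \<le> z xs ts\<close> by (simp add: z_def algebra_simps)
    show "u xs s - \<epsilon> * K * s < u xs ts - \<epsilon> * K * ts" if "0 \<le> s" "s < ts" for s
      using before[OF that] \<open>0 \<le> z xs ts\<close> by (simp add: z_def algebra_simps)
  qed
qed

lemma touching_point_above_level:
  fixes u :: "pt \<Rightarrow> real \<Rightarrow> real" and K M :: real
  assumes dom: "smooth_bounded_domain \<Omega> \<phi>" and u: "C21 \<Omega> T u" and "0 \<le> K"
    and init: "\<And>x. x \<in> closure \<Omega> \<Longrightarrow> u x 0 \<le> M"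
    and "x0 \<in> \<Omega>" "t0 \<in> tint T" "M < u x0 t0"
  obtains \<epsilon> xs ts where "\<epsilon> > 0" "xs \<in> closure \<Omega>" "ts \<in> tint T" "M \<le> u xs ts"
    "\<And>y. y \<in> closure \<Omega> \<Longrightarrow> u y ts - \<epsilon> * \<phi> y \<le> u xs ts - \<epsilon> * \<phi> xs"
    "\<And>s. 0 \<le> s \<Longrightarrow> s < ts \<Longrightarrow> u xs s - \<epsilon> * K * s < u xs ts - \<epsilon> * K * ts"
proof -
  have "compact (closure \<Omega>)" "continuous_on (closure \<Omega>) \<phi>"
    using dom smooth_C2(1)[THEN continuous_on_subset] unfolding smooth_bounded_domain_def
    by (auto simp: compact_closure)
  then obtain c where "c \<ge> 0" "\<forall>x\<in>closure \<Omega>. \<bar>\<phi> x\<bar> \<le> c"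
    by (rule compact_continuous_abs_bound)
  note c = this(1) this(2)[rule_format]
  have x0: "x0 \<in> closure \<Omega>"
    using \<open>x0 \<in> \<Omega>\<close> closure_subset by blast
  have "0 < t0"
    using \<open>t0 \<in> tint T\<close> by (simp add: tint_def)
  define \<epsilon> where "\<epsilon> = (u x0 t0 - M) / (2 * c + 1 + K * t0)"
  have den: "2 * c + 1 + K * t0 > 0"
    using c(1) \<open>0 \<le> K\<close> \<open>0 < t0\<close> by (simp add: add_pos_nonneg)
  then have "\<epsilon> > 0"
    using \<open>M < u x0 t0\<close> by (simp add: \<epsilon>_def)
  have "\<epsilon> * (\<phi> x0 + c + 1 + K * t0) \<le> \<epsilon> * (2 * c + 1 + K * t0)"
    using c(2)[OF x0] \<open>\<epsilon> > 0\<close> by (intro mult_left_mono) (auto simp: abs_le_iff)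
  also have "\<dots> = u x0 t0 - M"
    using den by (simp add: \<epsilon>_def)
  finally have "\<epsilon> * (\<phi> x0 + c + 1 + K * t0) \<le> u x0 t0 - M" .
  with first_touching_of_perturbation[OF dom u \<open>0 \<le> K\<close> \<open>\<epsilon> > 0\<close> c(2) init x0 \<open>t0 \<in> tint T\<close>]
  show ?thesis
    using that[OF \<open>\<epsilon> > 0\<close>] by metis
qed

lemma interior_touching_rate_bound:
  fixes u :: "pt \<Rightarrow> real \<Rightarrow> real"
  assumes u: "C21 \<Omega> T u" and "open \<Omega>" and sm: "smooth \<phi>" and "d > 0" "\<epsilon> > 0"
    and "xs \<in> \<Omega>" "ts \<in> tint T" and "0 < ts"
    and sub: "deriv (\<lambda>s. u xs s) ts \<le> d * lap (\<lambda>y. u y ts) xs" and "lap \<phi> xs \<le> L"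
    and touch: "\<And>y. y \<in> \<Omega> \<Longrightarrow> u y ts - \<epsilon> * \<phi> y \<le> u xs ts - \<epsilon> * \<phi> xs"
    and before: "\<And>s. 0 \<le> s \<Longrightarrow> s < ts \<Longrightarrow> u xs s - \<epsilon> * K * s < u xs ts - \<epsilon> * K * ts"
  shows "K \<le> d * L"
proof -
  obtain r where "r > 0" "ball xs r \<subseteq> \<Omega>"
    using \<open>open \<Omega>\<close> \<open>xs \<in> \<Omega>\<close> openE by blast
  then have "lap (\<lambda>y. u y ts) xs \<le> \<epsilon> * lap \<phi> xs"
    using \<open>xs \<in> \<Omega>\<close> \<open>ts \<in> tint T\<close>
    by (intro lap_le_at_touching_point C21_has_pd[OF u] C21_has_pd2[OF u] smooth_C2[OF sm] touch) auto
  also have "\<dots> \<le> \<epsilon> * L"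
    using \<open>lap \<phi> xs \<le> L\<close> \<open>\<epsilon> > 0\<close> by simp
  finally have lap_bound: "d * lap (\<lambda>y. u y ts) xs \<le> d * (\<epsilon> * L)"
    using \<open>d > 0\<close> by simp
  define g where "g s = u xs s - \<epsilon> * K * s - (u xs ts - \<epsilon> * K * ts)" for s
  have "((\<lambda>s. u xs s) has_real_derivative deriv (\<lambda>s. u xs s) ts) (at ts)"
    using C21_time_differentiable[OF u \<open>xs \<in> \<Omega>\<close> \<open>ts \<in> tint T\<close>]
    by (simp add: DERIV_deriv_iff_real_differentiable)
  then have "(g has_real_derivative deriv (\<lambda>s. u xs s) ts - \<epsilon> * K) (at ts)"
    unfolding g_def by (auto intro!: derivative_eq_intros)
  from derivative_nonneg_at_first_zero[OF this \<open>0 < ts\<close>] before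
  have "\<epsilon> * K \<le> deriv (\<lambda>s. u xs s) ts"
    by (simp add: g_def)
  with sub lap_bound have "\<epsilon> * K \<le> \<epsilon> * (d * L)"
    by (simp add: algebra_simps)
  with \<open>\<epsilon> > 0\<close> show ?thesis
    by simp
qed

lemma Neumann_comparison:
  fixes u :: "pt \<Rightarrow> real \<Rightarrow> real" and d M :: real
  assumes dom: "smooth_bounded_domain \<Omega> \<phi>" and u: "C21 \<Omega> T u" and bc: "neumann_bc \<Omega> \<phi> T u"
    and "d > 0"
    and sub: "\<And>x t. x \<in> \<Omega> \<Longrightarrow> t \<in> tint T \<Longrightarrow> M \<le> u x t \<Longrightarrow> deriv (\<lambda>s. u x s) t \<le> d * lap (\<lambda>y. u y t) x"
    and init: "\<And>x. x \<in> closure \<Omega> \<Longrightarrow> u x 0 \<le> M"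
    and "x0 \<in> \<Omega>" "t0 \<in> tint T"
  shows "u x0 t0 \<le> M"
proof (rule ccontr)
  assume "\<not> u x0 t0 \<le> M"
  have "open \<Omega>" and sm: "smooth \<phi>" and cpt: "compact (closure \<Omega>)"
    using dom unfolding smooth_bounded_domain_def by (auto simp: compact_closure)
  obtain L where L: "L \<ge> 0" "\<forall>x\<in>closure \<Omega>. \<bar>lap \<phi> x\<bar> \<le> L"
    using compact_continuous_abs_bound[OF cpt continuous_on_subset[OF smooth_continuous_lap[OF sm] subset_UNIV]] .
  have "0 \<le> d * L + 1"
    using \<open>d > 0\<close> L(1) by simp
  moreover have "M < u x0 t0"
    using \<open>\<not> u x0 t0 \<le> M\<close> by simp
  ultimately obtain \<epsilon> xs ts where "\<epsilon> > 0" and xs: "xs \<in> closure \<Omega>" and ts: "ts \<in> tint T"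
    and "M \<le> u xs ts" and touch: "\<And>y. y \<in> closure \<Omega> \<Longrightarrow> u y ts - \<epsilon> * \<phi> y \<le> u xs ts - \<epsilon> * \<phi> xs"
    and before: "\<And>s. 0 \<le> s \<Longrightarrow> s < ts \<Longrightarrow>
      u xs s - \<epsilon> * (d * L + 1) * s < u xs ts - \<epsilon> * (d * L + 1) * ts"
    using touching_point_above_level[OF dom u _ init \<open>x0 \<in> \<Omega>\<close> \<open>t0 \<in> tint T\<close>] by blast
  consider "xs \<in> \<Omega>" | "xs \<in> frontier \<Omega>"
    using xs by (auto simp: closure_Un_frontier)
  then show False
  proof cases
    case 1
    have "d * L + 1 \<le> d * L"
      using ts L(2) xs touch closure_subset
      by (intro interior_touching_rate_bound[OF u \<open>open \<Omega>\<close> sm \<open>d > 0\<close> \<open>\<epsilon> > 0\<close> 1 ts _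
            sub[OF 1 ts \<open>M \<le> u xs ts\<close>] _ _ before]) (auto simp: tint_def)
    then show False
      by simp
  next
    case 2
    have "\<exists>y\<in>\<Omega>. u xs ts - \<epsilon> * \<phi> xs < u y ts - \<epsilon> * \<phi> y"
      using ts
      by (intro Neumann_perturbation_increases_inward[OF dom 2 \<open>\<epsilon> > 0\<close>] C21_slice_continuous[OF u]
          C21_slice_has_derivative[OF u \<open>open \<Omega>\<close>] neumann_bc_slice[OF bc 2])
        (auto simp: tint_def tint0_def)
    then show False
      using touch closure_subset by force
  qed
qed

section \<open>Logistic bounds for \<open>u\<close> and \<open>v\<close>\<close>

lemma logistic_upper_bound:
  fixes u :: "pt \<Rightarrow> real \<Rightarrow> real" and d r \<mu> :: real
  assumes dom: "smooth_bounded_domain \<Omega> \<phi>" and "0 < T" and u: "C21 \<Omega> T u"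
    and bc: "neumann_bc \<Omega> \<phi> T u" and "d > 0" "\<mu> > 0"
    and nonneg: "\<And>x t. x \<in> \<Omega> \<Longrightarrow> t \<in> tint T \<Longrightarrow> 0 \<le> u x t"
    and logistic: "\<And>x t. x \<in> \<Omega> \<Longrightarrow> t \<in> tint T \<Longrightarrow>
      deriv (\<lambda>s. u x s) t \<le> d * lap (\<lambda>y. u y t) x + u x t * (r - \<mu> * u x t)"
  obtains M where "\<And>x t. x \<in> \<Omega> \<Longrightarrow> t \<in> tint T \<Longrightarrow> u x t \<le> M"
proof -
  have "compact (closure \<Omega>)"
    using dom unfolding smooth_bounded_domain_def compact_closure by blast
  moreover have "0 \<in> tint0 T"
    using \<open>0 < T\<close> by (simp add: tint0_def zero_ereal_def)
  ultimately obtain B where B: "\<forall>x\<in>closure \<Omega>. \<bar>u x 0\<bar> \<le> B"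
    using compact_continuous_abs_bound C21_slice_continuous[OF u] by metis
  have "u x t \<le> max B (r / \<mu>)" if "x \<in> \<Omega>" "t \<in> tint T" for x t
  proof (rule Neumann_comparison[OF dom u bc \<open>d > 0\<close> _ _ that])
    fix x t assume x: "x \<in> \<Omega>" and t: "t \<in> tint T" and "max B (r / \<mu>) \<le> u x t"
    then have "r - \<mu> * u x t \<le> 0"
      using \<open>\<mu> > 0\<close> by (simp add: pos_divide_le_eq mult.commute)
    then have "u x t * (r - \<mu> * u x t) \<le> 0"
      using nonneg[OF x t] by (rule mult_nonneg_nonpos[rotated])
    then show "deriv (\<lambda>s. u x s) t \<le> d * lap (\<lambda>y. u y t) x"
      using logistic[OF x t] by linarith
  next
    fix x assume "x \<in> closure \<Omega>"
    then show "u x 0 \<le> max B (r / \<mu>)"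
      using B by force
  qed
  then show ?thesis
    using that by blast
qed

lemma classical_solution_u_logistic:
  assumes cs: "classical_solution \<Omega> \<phi> d chi lam mu a b u0 v0 w0 T u v w"
    and "0 \<le> a 1" "0 \<le> a 2" and "x \<in> \<Omega>" "t \<in> tint T"
    and "0 \<le> u x t" "0 \<le> v x t" "0 \<le> w x t"
  shows "deriv (\<lambda>s. u x s) t \<le> d 1 * lap (\<lambda>y. u y t) x + u x t * (lam 1 - mu 1 * u x t)"
proof -
  have "deriv (\<lambda>s. u x s) t
      = d 1 * lap (\<lambda>y. u y t) x + u x t * (lam 1 - mu 1 * u x t - a 1 * v x t - a 2 * w x t)"
    using cs \<open>x \<in> \<Omega>\<close> \<open>t \<in> tint T\<close> unfolding classical_solution_def by blast
  moreover have "0 \<le> u x t * (a 1 * v x t + a 2 * w x t)"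
    using assms(2-) by simp
  ultimately show ?thesis
    by (simp add: algebra_simps)
qed

lemma classical_solution_v_logistic:
  assumes cs: "classical_solution \<Omega> \<phi> d chi lam mu a b u0 v0 w0 T u v w"
    and "0 \<le> b 1" "0 \<le> a 3" and "x \<in> \<Omega>" "t \<in> tint T"
    and "u x t \<le> M" "0 \<le> v x t" "0 \<le> w x t"
  shows "deriv (\<lambda>s. v x s) t \<le> d 2 * lap (\<lambda>y. v y t) x + v x t * (lam 2 + b 1 * M - mu 2 * v x t)"
proof -
  have "deriv (\<lambda>s. v x s) t
      = d 2 * lap (\<lambda>y. v y t) x + v x t * (lam 2 - mu 2 * v x t + b 1 * u x t - a 3 * w x t)"
    using cs \<open>x \<in> \<Omega>\<close> \<open>t \<in> tint T\<close> unfolding classical_solution_def by blast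
  moreover have "b 1 * u x t - a 3 * w x t \<le> b 1 * M"
    using mult_left_mono[OF \<open>u x t \<le> M\<close> \<open>0 \<le> b 1\<close>] mult_nonneg_nonneg[OF \<open>0 \<le> a 3\<close> \<open>0 \<le> w x t\<close>]
    by linarith
  then have "v x t * (b 1 * u x t - a 3 * w x t) \<le> v x t * (b 1 * M)"
    using \<open>0 \<le> v x t\<close> by (rule mult_left_mono)
  ultimately show ?thesis
    by (simp add: algebra_simps)
qed

theorem lemma3p1:
  fixes \<Omega> :: "(real^2) set" and \<phi> :: "real^2 \<Rightarrow> real"
    and d lam mu a b :: "nat \<Rightarrow> real" and chi :: real
    and u0 v0 w0 :: "real^2 \<Rightarrow> real" and Tmax :: ereal
    and u v w :: "real^2 \<Rightarrow> real \<Rightarrow> real"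
  assumes dom: "smooth_bounded_domain \<Omega> \<phi>"
    and pos: "\<forall>i\<in>{1,2,3}. d i > 0 \<and> lam i > 0 \<and> mu i > 0 \<and> a i > 0 \<and> b i > 0" "chi > 0"
    and u0: "\<exists>\<theta>>2. W1 \<Omega> \<theta> u0" "AE x in lborel. x \<in> \<Omega> \<longrightarrow> 0 \<le> u0 x"
    and v0: "\<exists>\<theta>>2. W1 \<Omega> \<theta> v0" "AE x in lborel. x \<in> \<Omega> \<longrightarrow> 0 \<le> v0 x"
    and w0: "continuous_on (closure \<Omega>) w0" "\<forall>x\<in>closure \<Omega>. 0 \<le> w0 x"
    and sol: "maximal_solution \<Omega> \<phi> d chi lam mu a b u0 v0 w0 Tmax u v w"
    and nonneg: "\<forall>x\<in>closure \<Omega>. \<forall>t\<in>tint0 Tmax. 0 \<le> u x t \<and> 0 \<le> v x t \<and> 0 \<le> w x t"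
  shows "\<exists>C>0. \<forall>x\<in>\<Omega>. \<forall>t\<in>tint Tmax. \<bar>u x t\<bar> \<le> C \<and> \<bar>v x t\<bar> \<le> C"
proof -
  \<comment> \<open>only the sign and regularity of the solution are used, not the hypotheses on the data\<close>
  have cs: "classical_solution \<Omega> \<phi> d chi lam mu a b u0 v0 w0 Tmax u v w"
    using sol unfolding maximal_solution_def by blast
  then have "0 < Tmax" and u: "C21 \<Omega> Tmax u" "neumann_bc \<Omega> \<phi> Tmax u"
    and v: "C21 \<Omega> Tmax v" "neumann_bc \<Omega> \<phi> Tmax v"
    unfolding classical_solution_def neumann_bc_def by auto
  have nn: "0 \<le> u x t" "0 \<le> v x t" "0 \<le> w x t" if "x \<in> \<Omega>" "t \<in> tint Tmax" for x t
    using nonneg that closure_subset unfolding tint_def tint0_def by force+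
  have u_logistic: "deriv (\<lambda>s. u x s) t \<le> d 1 * lap (\<lambda>y. u y t) x + u x t * (lam 1 - mu 1 * u x t)"
    if "x \<in> \<Omega>" "t \<in> tint Tmax" for x t
    using classical_solution_u_logistic[OF cs _ _ that nn[OF that]] pos(1) by simp
  obtain M1 where M1: "\<And>x t. x \<in> \<Omega> \<Longrightarrow> t \<in> tint Tmax \<Longrightarrow> u x t \<le> M1"
    by (rule logistic_upper_bound[OF dom \<open>0 < Tmax\<close> u _ _ nn(1) u_logistic]) (use pos in auto)
  have v_logistic: "deriv (\<lambda>s. v x s) t \<le> d 2 * lap (\<lambda>y. v y t) x + v x t * (lam 2 + b 1 * M1 - mu 2 * v x t)"
    if "x \<in> \<Omega>" "t \<in> tint Tmax" for x t
    using classical_solution_v_logistic[OF cs _ _ that M1[OF that] nn(2,3)[OF that]] pos(1) by simp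
  obtain M2 where M2: "\<And>x t. x \<in> \<Omega> \<Longrightarrow> t \<in> tint Tmax \<Longrightarrow> v x t \<le> M2"
    by (rule logistic_upper_bound[OF dom \<open>0 < Tmax\<close> v _ _ nn(2) v_logistic]) (use pos in auto)
  have "\<bar>u x t\<bar> \<le> max (max M1 M2) 1 \<and> \<bar>v x t\<bar> \<le> max (max M1 M2) 1"
    if "x \<in> \<Omega>" "t \<in> tint Tmax" for x t
    using M1[OF that] M2[OF that] nn[OF that] by linarith
  then show ?thesis
    by (intro exI[of _ "max (max M1 M2) 1"]) auto
qed

end
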